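(* Consider the CT–DT interconnected system of the context and let Assumptions (A1), (A2), (A3) hold with norms $\|\cdot\|_{\mathcal X}$, $\|\cdot\|_{\mathcal Z}$. Let $\xi\in\mathbb R$ with $\xi\ge\mathsf{osLip}_x(f)$ and let $\zeta>0$ be such that $\mathsf{osLip}\big(x\mapsto f(x,z^*(x))\big)\le-\zeta$, where $z^*(x)$ is the unique fixed point of $z\mapsto\mathsf G(x,z)$. Define $$C_1:=\frac{\mathsf{Lip}_z(f)\mathsf{Lip}_x(\mathsf G)}{1-\mathsf{Lip}_z(\mathsf G)}\Big(\mathsf{Lip}_x(f)+\frac{\mathsf{Lip}_z(f)\mathsf{Lip}_x(\mathsf G)}{1-\mathsf{Lip}_z(\mathsf G)}\Big),\qquad C_2(n):=[\mathsf{Lip}_z(\mathsf G)]^n\frac{\mathsf{Lip}_x(\mathsf G)\mathsf{Lip}_z(f)}{1-\mathsf{Lip}_z(\mathsf G)},$$ and $$T(n):=\begin{cases}\dfrac1\xi\log\Big(\dfrac{\xi(1-[\mathsf{Lip}_z(\mathsf G)]^n)}{C_2(n)+C_1/\zeta}+1\Big),&\xi\ne0,\\[2ex]\dfrac{1-[\mathsf{Lip}_z(\mathsf G)]^n}{C_2(n)+C_1/\zeta},&\xi=0,\end{cases}$$ (for $\xi<0$ such that the argument of the logarithm is $\le 0$, interpret $T(n)=+\infty$). Then for every $n\in\mathbb Z_{>0}$, $T(n)>0$, and for every $T$ with $0<T<T(n)$ the origin is globally exponentially stable for the interconnected system: there exist $\eta\in\mathbb R^2_{>0}$, $\varrho>0$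 and $\alpha>0$ such that every solution satisfies $$\big\|(\|x(t)\|_{\mathcal X},\|z(t)\|_{\mathcal Z})\big\|_{2,[\eta]}\le\varrho e^{-\alpha t}\big\|(\|x(0)\|_{\mathcal X},\|z(0)\|_{\mathcal Z})\big\|_{2,[\eta]}\quad\forall t\ge0,$$ where $\|(v_1,v_2)\|_{2,[\eta]}:=\sqrt{\eta_1v_1^2+\eta_2v_2^2}$.
   Context: Setup. Let $\|\cdot\|_{\mathcal X}$ be a norm on $\mathbb R^{n_x}$ and $\|\cdot\|_{\mathcal Z}$ a norm on $\mathbb R^{n_z}$; $\mathcal X\subseteq\mathbb R^{n_x}$, $\mathcal Z\subseteq\mathbb R^{n_z}$ convex. $f:\mathcal X\times\mathcal Z\to\mathbb R^{n_x}$ and $\mathsf G:\mathcal X\times\mathcal Z\to\mathcal Z$ continuous, $\mathsf G^1=\mathsf G$, $\mathsf G^{m+1}(x,z)=\mathsf G(x,\mathsf G^m(x,z))$. For $T>0$, $n\in\mathbb Z_{>0}$ the interconnected system is $\dot x(t)=f(x(t),z(t))$, $z_k=\mathsf G^n(x(kT),z_{k-1})$, $z(t)=z_k$ for $t\in[kT,(k+1)T)$, with $\mathcal X\times\mathcal Z$ forward invariant; $f(0,0)=0$, $\mathsf G(0,0)=0$ (so $z^*(0)=0$). Lipschitz notions: $\mathsf{Lip}_z(f):=\sup_x\sup_{z_1\ne z_2}\|f(x,z_1)-f(x,z_2)\|_{\mathcal X}/\|z_1-z_2\|_{\mathcal Z}$, and $\mathsf{Lip}_x(f),\mathsf{Lip}_x(\mathsf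 G),\mathsf{Lip}_z(\mathsf G)$ analogously. $\llbracket\cdot;\cdot\rrbracket$ is a weak pairing on $\mathbb R^{n_x}$ compatible with $\|\cdot\|_{\mathcal X}$; $\mathsf{osLip}_x(f):=\sup_z\sup_{x_1\ne x_2}\llbracket f(x_1,z)-f(x_2,z);x_1-x_2\rrbracket/\|x_1-x_2\|_{\mathcal X}^2$; for $F:\mathcal X\to\mathbb R^{n_x}$, $\mathsf{osLip}(F):=\sup_{x_1\ne x_2}\llbracket F(x_1)-F(x_2);x_1-x_2\rrbracket/\|x_1-x_2\|^2_{\mathcal X}$. Assumptions: (A1) $\mathsf{Lip}_x(f)<\infty$; (A2) $\mathsf{Lip}_z(f)\in(0,\infty)$ and $\mathsf{Lip}_x(\mathsf G)\in(0,\infty)$; (A3) $\mathsf{Lip}_z(\mathsf G)<1$. *)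

theory Defs
  imports "HOL-Analysis.Analysis"
begin

definition is_norm :: "('v::real_vector \<Rightarrow> real) \<Rightarrow> bool" where
  "is_norm N \<longleftrightarrow>
     (\<forall>x. N x = 0 \<longleftrightarrow> x = 0) \<and>
     (\<forall>a x. N (a *\<^sub>R x) = \<bar>a\<bar> * N x) \<and>
     (\<forall>x y. N (x + y) \<le> N x + N y)"

definition weak_pairing :: "('v::real_normed_vector \<Rightarrow> 'v \<Rightarrow> real) \<Rightarrow> bool" where
  "weak_pairing wp \<longleftrightarrow>
     (\<forall>x1 x2 y. wp (x1 + x2) y \<le> wp x1 y + wp x2 y) \<and>
     (\<forall>y. continuous_on UNIV (\<lambda>x. wp x y)) \<and>
     (\<forall>a x y. a \<ge> 0 \<longrightarrow> wp (a *\<^sub>R x) y = a * wp x y \<and> wp x (a *\<^sub>R y) = a * wp x y) \<and>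
     (\<forall>x y. wp (- x) (- y) = wp x y) \<and>
     (\<forall>x. x \<noteq> 0 \<longrightarrow> wp x x > 0) \<and>
     (\<forall>x y. \<bar>wp x y\<bar> \<le> sqrt (wp x x) * sqrt (wp y y))"

text \<open>Compatibility with a norm, together with Deimling's inequality and the curve norm
  derivative formula (standing conventions for weak pairings in this literature).\<close>
definition compatible_weak_pairing ::
    "('v::real_normed_vector \<Rightarrow> 'v \<Rightarrow> real) \<Rightarrow> ('v \<Rightarrow> real) \<Rightarrow> bool" where
  "compatible_weak_pairing wp N \<longleftrightarrow>
     weak_pairing wp \<and>
     (\<forall>x. wp x x = (N x)\<^sup>2) \<and>
     (\<forall>x y D. ((\<lambda>h. (N (y + h *\<^sub>R x) - N y) / h) \<longlongrightarrow> D) (at_right 0)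
              \<longrightarrow> wp x y \<le> N y * D) \<and>
     (\<forall>a b (c :: real \<Rightarrow> 'v) c'. a < b \<longrightarrow>
        (\<forall>t\<in>{a<..<b}. (c has_vector_derivative c' t) (at t)) \<longrightarrow>
        (AE t in lebesgue_on {a<..<b}.
           ((\<lambda>h. N (c t) * ((N (c (t + h)) - N (c t)) / h)) \<longlongrightarrow> wp (c' t) (c t))
             (at_right 0)))"

definition Lip_z :: "('x \<Rightarrow> 'z::minus \<Rightarrow> 'w::minus) \<Rightarrow> ('w \<Rightarrow> real) \<Rightarrow> ('z \<Rightarrow> real)
    \<Rightarrow> 'x set \<Rightarrow> 'z set \<Rightarrow> ereal" where
  "Lip_z F NW NZ X Z =
     (SUP (x, z1, z2) \<in> {(x, z1, z2). x \<in> X \<and> z1 \<in> Z \<and> z2 \<in> Z \<and> z1 \<noteq> z2}.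
        ereal (NW (F x z1 - F x z2) / NZ (z1 - z2)))"

definition Lip_x :: "('x::minus \<Rightarrow> 'z \<Rightarrow> 'w::minus) \<Rightarrow> ('w \<Rightarrow> real) \<Rightarrow> ('x \<Rightarrow> real)
    \<Rightarrow> 'x set \<Rightarrow> 'z set \<Rightarrow> ereal" where
  "Lip_x F NW NX X Z =
     (SUP (z, x1, x2) \<in> {(z, x1, x2). z \<in> Z \<and> x1 \<in> X \<and> x2 \<in> X \<and> x1 \<noteq> x2}.
        ereal (NW (F x1 z - F x2 z) / NX (x1 - x2)))"

definition osLip_x :: "('x::minus \<Rightarrow> 'z \<Rightarrow> 'x) \<Rightarrow> ('x \<Rightarrow> 'x \<Rightarrow> real) \<Rightarrow> ('x \<Rightarrow> real)
    \<Rightarrow> 'x set \<Rightarrow> 'z set \<Rightarrow> ereal" where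
  "osLip_x F wp NX X Z =
     (SUP (z, x1, x2) \<in> {(z, x1, x2). z \<in> Z \<and> x1 \<in> X \<and> x2 \<in> X \<and> x1 \<noteq> x2}.
        ereal (wp (F x1 z - F x2 z) (x1 - x2) / (NX (x1 - x2))\<^sup>2))"

definition osLip :: "('x::minus \<Rightarrow> 'x) \<Rightarrow> ('x \<Rightarrow> 'x \<Rightarrow> real) \<Rightarrow> ('x \<Rightarrow> real)
    \<Rightarrow> 'x set \<Rightarrow> ereal" where
  "osLip F wp NX X =
     (SUP (x1, x2) \<in> {(x1, x2). x1 \<in> X \<and> x2 \<in> X \<and> x1 \<noteq> x2}.
        ereal (wp (F x1 - F x2) (x1 - x2) / (NX (x1 - x2))\<^sup>2))"

definition Giter :: "('x \<Rightarrow> 'z \<Rightarrow> 'z) \<Rightarrow> nat \<Rightarrow> 'x \<Rightarrow> 'z \<Rightarrow> 'z" where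
  "Giter G n x z = (G x ^^ n) z"

text \<open>A (global, forward) solution: x is the continuous-time state on [0,oo), zd k = z_k
  for k \<ge> 0, zm1 = z_{-1} the initial discrete state; z(t) = z_k on [kT,(k+1)T).\<close>
definition interconnected_solution ::
    "('x::real_normed_vector \<Rightarrow> 'z \<Rightarrow> 'x) \<Rightarrow> ('x \<Rightarrow> 'z \<Rightarrow> 'z) \<Rightarrow> 'x set \<Rightarrow> 'z set
     \<Rightarrow> real \<Rightarrow> nat \<Rightarrow> (real \<Rightarrow> 'x) \<Rightarrow> 'z \<Rightarrow> (nat \<Rightarrow> 'z) \<Rightarrow> bool" where
  "interconnected_solution f G X Z T n x zm1 zd \<longleftrightarrow>
     zm1 \<in> Z \<and>
     (\<forall>t\<ge>0. x t \<in> X) \<and>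
     zd 0 = Giter G n (x 0) zm1 \<and>
     (\<forall>k. zd (Suc k) = Giter G n (x (real (Suc k) * T)) (zd k)) \<and>
     (\<forall>k. \<forall>t\<in>{real k * T .. real (Suc k) * T}.
        (x has_vector_derivative f (x t) (zd k)) (at t within {real k * T .. real (Suc k) * T}))"

definition zsig :: "real \<Rightarrow> (nat \<Rightarrow> 'z) \<Rightarrow> real \<Rightarrow> 'z" where
  "zsig T zd t = zd (nat \<lfloor>t / T\<rfloor>)"

definition eta_norm :: "real \<Rightarrow> real \<Rightarrow> real \<Rightarrow> real \<Rightarrow> real" where
  "eta_norm \<eta>1 \<eta>2 v1 v2 = sqrt (\<eta>1 * v1\<^sup>2 + \<eta>2 * v2\<^sup>2)"

definition C1_const :: "real \<Rightarrow> real \<Rightarrow> real \<Rightarrow> real \<Rightarrow> real" where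
  "C1_const Lxf Lzf LxG LzG =
     (Lzf * LxG / (1 - LzG)) * (Lxf + Lzf * LxG / (1 - LzG))"

definition C2_const :: "real \<Rightarrow> real \<Rightarrow> real \<Rightarrow> nat \<Rightarrow> real" where
  "C2_const Lzf LxG LzG n = LzG ^ n * (LxG * Lzf / (1 - LzG))"

definition T_crit :: "real \<Rightarrow> real \<Rightarrow> real \<Rightarrow> real \<Rightarrow> real \<Rightarrow> nat \<Rightarrow> ereal" where
  "T_crit \<xi> \<zeta> C1 C2 LzG n =
     (if \<xi> = 0 then ereal ((1 - LzG ^ n) / (C2 + C1 / \<zeta>))
      else (let a = \<xi> * (1 - LzG ^ n) / (C2 + C1 / \<zeta>) + 1 in
            if a \<le> 0 then \<infinity> else ereal (ln a / \<xi>)))"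

end

theory Submission
  imports Defs
begin

(* On each sampling interval the discrete state z is frozen.  Deimling's inequality for the
   weak pairing turns the one-sided Lipschitz bounds into scalar comparison estimates: the drift
   |x(t) - x(kT)| grows at most like int_exp xi (t - kT), and, comparing with the contracting
   reduced field x |-> f x (z* x),
     |x((k+1)T)| <= exp (-zeta T) |x(kT)| + Lzf * int_exp (-zeta) T * E_k,
   where E_k bounds the distance of z_k from the quasi-steady state z*(x(t)) on the interval.
   The n contraction steps of G shrink that distance by LzG^n.  So u_k = |x(kT)| and
   v_k = |z_k - z*(x(kT))| obey a linear recursion with a nonnegative 2x2 matrix whose
   determinant condition is exactly T < T(n); a positive left sub-eigenvector of that matrix
   gives geometric decay of (u_k, v_k), which interpolates to exponential decay in continuous
   time. *)

lemma is_norm_zero: "is_norm N \<Longrightarrow> N 0 = 0"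
  unfolding is_norm_def by auto

lemma is_norm_eq_0_iff: "is_norm N \<Longrightarrow> N x = 0 \<longleftrightarrow> x = 0"
  unfolding is_norm_def by blast

lemma is_norm_scaleR: "is_norm N \<Longrightarrow> N (a *\<^sub>R x) = \<bar>a\<bar> * N x"
  unfolding is_norm_def by blast

lemma is_norm_triangle: "is_norm N \<Longrightarrow> N (x + y) \<le> N x + N y"
  unfolding is_norm_def by blast

lemma is_norm_minus: "is_norm N \<Longrightarrow> N (- x) = N x"
  using is_norm_scaleR[of N "-1" x] by simp

lemma is_norm_minus_commute: "is_norm N \<Longrightarrow> N (x - y) = N (y - x)"
  using is_norm_minus[of N "x - y"] by simp

lemma is_norm_nonneg: "is_norm N \<Longrightarrow> 0 \<le> N x"
  using is_norm_triangle[of N x "- x"] is_norm_zero[of N] is_norm_minus[of N x] by simp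

lemma is_norm_pos: "is_norm N \<Longrightarrow> x \<noteq> 0 \<Longrightarrow> 0 < N x"
  using is_norm_nonneg is_norm_eq_0_iff by (metis less_eq_real_def)

lemma is_norm_triangle_diff: "is_norm N \<Longrightarrow> N (x - z) \<le> N (x - y) + N (y - z)"
  using is_norm_triangle[of N "x - y" "y - z"] by simp

lemma is_norm_diff_ge: "is_norm N \<Longrightarrow> N x - N y \<le> N (x - y)"
  using is_norm_triangle[of N "x - y" y] by simp

lemma is_norm_sum: "is_norm N \<Longrightarrow> N (sum g A) \<le> (\<Sum>i\<in>A. N (g i))"
  by (induction A rule: infinite_finite_induct)
    (auto simp: is_norm_zero intro: order_trans[OF is_norm_triangle])

lemma is_norm_le_norm:
  fixes N :: "'v::euclidean_space \<Rightarrow> real"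
  assumes "is_norm N"
  obtains C where "0 < C" "\<And>x. N x \<le> C * norm x"
proof
  let ?C = "1 + (\<Sum>i\<in>Basis. N i)"
  show "0 < ?C"
    using is_norm_nonneg[OF assms] by (simp add: add_pos_nonneg sum_nonneg)
  fix x :: 'v
  have "N x = N (\<Sum>i\<in>Basis. (x \<bullet> i) *\<^sub>R i)" by (simp add: euclidean_representation)
  also have "\<dots> \<le> (\<Sum>i\<in>Basis. \<bar>x \<bullet> i\<bar> * N i)"
    using is_norm_sum[OF assms, of "\<lambda>i. (x \<bullet> i) *\<^sub>R i" Basis]
    by (simp add: is_norm_scaleR[OF assms])
  also have "\<dots> \<le> (\<Sum>i\<in>Basis. norm x * N i)"
    by (intro sum_mono mult_right_mono Basis_le_norm is_norm_nonneg[OF assms])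
  also have "\<dots> \<le> ?C * norm x" by (simp add: sum_distrib_left algebra_simps)
  finally show "N x \<le> ?C * norm x" .
qed

lemma is_norm_continuous_on:
  fixes N :: "'v::euclidean_space \<Rightarrow> real"
  assumes "is_norm N"
  shows "continuous_on S N"
proof -
  obtain C where C: "0 < C" "\<And>x. N x \<le> C * norm x" using is_norm_le_norm[OF assms] by blast
  have "\<bar>N x - N y\<bar> \<le> C * dist x y" for x y
    using is_norm_diff_ge[OF assms, of x y] is_norm_diff_ge[OF assms, of y x]
      C(2)[of "x - y"] C(2)[of "y - x"]
    by (simp add: dist_norm norm_minus_commute)
  then have "C-lipschitz_on S N"
    using C(1) by (intro lipschitz_onI) (auto simp: dist_real_def)
  then show ?thesis by (rule lipschitz_on_continuous_on)
qed

text \<open>By convexity of the norm, its one-sided difference quotients are monotone in the step and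
  bounded below, so the one-sided directional derivative required by Deimling's inequality exists.\<close>

lemma is_norm_difference_quotient_mono:
  assumes N: "is_norm N" and h: "0 < h1" "h1 \<le> h2"
  shows "(N (y + h1 *\<^sub>R x) - N y) / h1 \<le> (N (y + h2 *\<^sub>R x) - N y) / h2"
proof -
  define t where "t = h1 / h2"
  have t: "0 < t" "t \<le> 1" using h by (auto simp: t_def)
  have "y + h1 *\<^sub>R x = (1 - t) *\<^sub>R y + t *\<^sub>R (y + h2 *\<^sub>R x)"
    using h by (simp add: t_def algebra_simps)
  then have "N (y + h1 *\<^sub>R x) \<le> (1 - t) * N y + t * N (y + h2 *\<^sub>R x)"
    using is_norm_triangle[OF N, of "(1 - t) *\<^sub>R y" "t *\<^sub>R (y + h2 *\<^sub>R x)"] t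
    by (simp add: is_norm_scaleR[OF N])
  then have "N (y + h1 *\<^sub>R x) - N y \<le> t * (N (y + h2 *\<^sub>R x) - N y)"
    by (simp add: algebra_simps)
  then show ?thesis using h by (simp add: t_def pos_divide_le_eq mult.commute)
qed

lemma is_norm_difference_quotient_ge:
  assumes N: "is_norm N" and h: "0 < h"
  shows "- N x \<le> (N (y + h *\<^sub>R x) - N y) / h"
  using is_norm_diff_ge[OF N, of y "y + h *\<^sub>R x"] h
  by (simp add: is_norm_minus[OF N] is_norm_scaleR[OF N] field_simps)

lemma is_norm_directional_derivative_exists:
  assumes N: "is_norm N"
  shows "\<exists>D. ((\<lambda>h. (N (y + h *\<^sub>R x) - N y) / h) \<longlongrightarrow> D) (at_right 0)"
proof -
  define q where "q h = (N (y + h *\<^sub>R x) - N y) / h" for h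
  have bdd: "bdd_below (q ` {0<..})"
    using is_norm_difference_quotient_ge[OF N] unfolding q_def
    by (intro bdd_belowI[of _ "- N x"]) auto
  have "(q \<longlongrightarrow> Inf (q ` {0<..})) (at_right 0)"
  proof (rule tendstoI)
    fix e :: real assume "0 < e"
    then obtain h0 where h0: "0 < h0" "q h0 < Inf (q ` {0<..}) + e"
      using cInf_lessD[of "q ` {0<..}" "Inf (q ` {0<..}) + e"] by auto
    have "dist (q h) (Inf (q ` {0<..})) < e" if "0 < h" "h < h0" for h
    proof -
      have "Inf (q ` {0<..}) \<le> q h" using cInf_lower[OF _ bdd, of "q h"] that by simp
      moreover have "q h \<le> q h0"
        using is_norm_difference_quotient_mono[OF N] that unfolding q_def by simp
      ultimately show ?thesis using h0 by (simp add: dist_real_def)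
    qed
    then show "\<forall>\<^sub>F h in at_right 0. dist (q h) (Inf (q ` {0<..})) < e"
      using h0(1) by (auto simp: eventually_at_right_field)
  qed
  then show ?thesis unfolding q_def by blast
qed

context
  fixes wp :: "'v::real_normed_vector \<Rightarrow> 'v \<Rightarrow> real" and N :: "'v \<Rightarrow> real"
  assumes N: "is_norm N" and wp: "compatible_weak_pairing wp N"
begin

lemma pairing_add_left: "wp (x1 + x2) y \<le> wp x1 y + wp x2 y"
proof -
  have "\<forall>x1 x2 y. wp (x1 + x2) y \<le> wp x1 y + wp x2 y"
    using wp unfolding compatible_weak_pairing_def weak_pairing_def by (elim conjE)
  then show ?thesis by blast
qed

lemma pairing_zero_left: "wp 0 y = 0"
proof -
  have "\<forall>a x y. a \<ge> 0 \<longrightarrow> wp (a *\<^sub>R x) y = a * wp x y \<and> wp x (a *\<^sub>R y) = a * wp x y"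
    using wp unfolding compatible_weak_pairing_def weak_pairing_def by (elim conjE)
  from this[rule_format, of 0 y y] show ?thesis by simp
qed

lemma pairing_zero_right: "wp x 0 = 0"
proof -
  have "\<forall>a x y. a \<ge> 0 \<longrightarrow> wp (a *\<^sub>R x) y = a * wp x y \<and> wp x (a *\<^sub>R y) = a * wp x y"
    using wp unfolding compatible_weak_pairing_def weak_pairing_def by (elim conjE)
  from this[rule_format, of 0 x x] show ?thesis by simp
qed

lemma pairing_le_norm_mult: "wp x y \<le> N x * N y"
proof -
  have "\<forall>x y. \<bar>wp x y\<bar> \<le> sqrt (wp x x) * sqrt (wp y y)"
    using wp unfolding compatible_weak_pairing_def weak_pairing_def by (elim conjE)
  moreover have "\<forall>x. wp x x = (N x)\<^sup>2"
    using wp unfolding compatible_weak_pairing_def by (elim conjE)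
  ultimately show ?thesis
    using is_norm_nonneg[OF N, of x] is_norm_nonneg[OF N, of y]
    by (metis abs_le_D1 real_sqrt_abs abs_of_nonneg)
qed

lemma pairing_le_norm_derivative:
  "((\<lambda>h. (N (y + h *\<^sub>R x) - N y) / h) \<longlongrightarrow> D) (at_right 0) \<Longrightarrow> wp x y \<le> N y * D"
proof -
  have "\<forall>x y D. ((\<lambda>h. (N (y + h *\<^sub>R x) - N y) / h) \<longlongrightarrow> D) (at_right 0) \<longrightarrow> wp x y \<le> N y * D"
    using wp unfolding compatible_weak_pairing_def by (elim conjE)
  then show "((\<lambda>h. (N (y + h *\<^sub>R x) - N y) / h) \<longlongrightarrow> D) (at_right 0) \<Longrightarrow> wp x y \<le> N y * D" by blast
qed

text \<open>A left Dini-derivative estimate for the norm, from Deimling's inequality in the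
  direction \<open>- v\<close>.\<close>

lemma pairing_bound_imp_norm_left_step:
  assumes bound: "wp v y \<le> \<mu> * (N y)\<^sup>2 + \<beta> * N y" and "0 \<le> \<beta>" "0 < \<epsilon>"
  shows "\<forall>\<^sub>F h in at_right 0. N y - h * (\<mu> * N y + \<beta> + \<epsilon>) \<le> N (y - h *\<^sub>R v)"
proof (cases "y = 0")
  case True
  have "N y - h * (\<mu> * N y + \<beta> + \<epsilon>) \<le> N (y - h *\<^sub>R v)" if "0 < h" for h
  proof -
    have "0 \<le> h * (\<beta> + \<epsilon>)" using that assms(2,3) by simp
    then show ?thesis
      using True is_norm_nonneg[OF N, of "y - h *\<^sub>R v"] by (simp add: is_norm_zero[OF N])
  qed
  then show ?thesis by (auto simp: eventually_at_right_field intro: exI[of _ 1])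
next
  case False
  obtain D where D: "((\<lambda>h. (N (y + h *\<^sub>R (- v)) - N y) / h) \<longlongrightarrow> D) (at_right 0)"
    using is_norm_directional_derivative_exists[OF N] by blast
  have "- wp (- v) y \<le> wp v y"
    using pairing_add_left[of v "- v" y] pairing_zero_left by simp
  then have "N y * (- D) \<le> N y * (\<mu> * N y + \<beta>)"
    using pairing_le_norm_derivative[OF D] bound by (simp add: power2_eq_square algebra_simps)
  then have D_ge: "- D \<le> \<mu> * N y + \<beta>"
    using is_norm_pos[OF N False] by (rule mult_left_le_imp_le)
  have "\<forall>\<^sub>F h in at_right 0. dist ((N (y + h *\<^sub>R (- v)) - N y) / h) D < \<epsilon>"
    using D \<open>0 < \<epsilon>\<close> by (rule tendstoD)
  moreover have "\<forall>\<^sub>F h in at_right (0::real). 0 < h"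
    by (simp add: eventually_at_right_less)
  ultimately show ?thesis
  proof eventually_elim
    case (elim h)
    then have "h * (D - \<epsilon>) < N (y - h *\<^sub>R v) - N y"
      by (simp add: dist_real_def abs_less_iff field_simps)
    moreover have "h * (- D) \<le> h * (\<mu> * N y + \<beta>)"
      using elim D_ge by (intro mult_left_mono) auto
    ultimately show ?case by (simp add: algebra_simps)
  qed
qed

end

text \<open>\<open>int_exp \<mu> t\<close> is the integral of \<open>exp (\<mu> s)\<close> over \<open>[0, t]\<close>, i.e. the solution of
  \<open>v' = \<mu> v + 1\<close>, \<open>v 0 = 0\<close>.\<close>

definition int_exp :: "real \<Rightarrow> real \<Rightarrow> real" where
  "int_exp \<mu> t = (if \<mu> = 0 then t else (exp (\<mu> * t) - 1) / \<mu>)"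

lemma mult_int_exp: "\<mu> * int_exp \<mu> t = exp (\<mu> * t) - 1"
  by (simp add: int_exp_def)

lemma int_exp_0 [simp]: "int_exp \<mu> 0 = 0"
  by (simp add: int_exp_def)

lemma int_exp_diff_has_real_derivative:
  "((\<lambda>t. int_exp \<mu> (t - a)) has_real_derivative exp (\<mu> * (t - a))) (at t)"
  unfolding int_exp_def by (cases "\<mu> = 0") (auto intro!: derivative_eq_intros)

lemma int_exp_mono:
  assumes "s \<le> t"
  shows "int_exp \<mu> s \<le> int_exp \<mu> t"
proof -
  consider "\<mu> = 0" | "0 < \<mu>" | "\<mu> < 0" by linarith
  then show ?thesis
  proof cases
    case 2
    then have "exp (\<mu> * s) - 1 \<le> exp (\<mu> * t) - 1" using assms by simp
    then show ?thesis using 2 by (simp add: int_exp_def divide_right_mono)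
  next
    case 3
    then have "exp (\<mu> * t) - 1 \<le> exp (\<mu> * s) - 1" using assms by simp
    then show ?thesis using 3 by (simp add: int_exp_def divide_right_mono_neg)
  qed (use assms in \<open>simp add: int_exp_def\<close>)
qed

lemma int_exp_nonneg: "0 \<le> t \<Longrightarrow> 0 \<le> int_exp \<mu> t"
  using int_exp_mono[of 0 t \<mu>] by simp

lemma neg_on_interval_if_no_first_crossing:
  fixes w :: "real \<Rightarrow> real"
  assumes cont: "continuous_on {a..b} w" and "w a < 0"
    and earlier: "\<And>s. s \<in> {a<..b} \<Longrightarrow> 0 \<le> w s \<Longrightarrow> \<exists>h>0. h < s - a \<and> 0 \<le> w (s - h)"
    and s: "s \<in> {a..b}"
  shows "w s < 0"
proof (rule ccontr)
  define S where "S = {s \<in> {a..b}. 0 \<le> w s}"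
  assume "\<not> w s < 0"
  then have "S \<noteq> {}" using s unfolding S_def by auto
  moreover have "closed S"
    unfolding S_def using continuous_on_closed_Collect_le[OF continuous_on_const cont] by simp
  moreover have bdd: "bdd_below S" unfolding S_def by (auto intro: bdd_belowI[of _ a])
  ultimately have "Inf S \<in> S" using closed_contains_Inf by blast
  then have "Inf S \<in> {a<..b}" "0 \<le> w (Inf S)"
    using \<open>w a < 0\<close> unfolding S_def by (auto simp: less_eq_real_def)
  then obtain h where "0 < h" "h < Inf S - a" "0 \<le> w (Inf S - h)" using earlier by blast
  then have "Inf S - h \<in> S" using \<open>Inf S \<in> {a<..b}\<close> unfolding S_def by auto
  then show False using cInf_lower[OF _ bdd] \<open>0 < h\<close> by fastforce
qed

lemma DERIV_left_upper_bound:
  assumes "(g has_real_derivative D) (at s)" and "0 < \<epsilon>"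
  shows "\<forall>\<^sub>F h in at_right 0. g (s - h) \<le> g s - h * D + h * \<epsilon>"
proof -
  have "((\<lambda>h. (g (s + h) - g s) / h) \<longlongrightarrow> D) (at 0)"
    using assms(1) by (simp add: DERIV_def)
  then have "((\<lambda>h. (g (s + - h) - g s) / - h) \<longlongrightarrow> D) (at_right 0)"
  proof (rule filterlim_compose)
    show "filterlim uminus (at 0) (at_right (0::real))"
      by (rule filterlim_atI) (auto intro!: tendsto_minus_cancel_left[THEN iffD1] tendsto_ident_at
          eventually_mono[OF eventually_at_right_less])
  qed
  then have "\<forall>\<^sub>F h in at_right 0. dist ((g (s + - h) - g s) / - h) D < \<epsilon>"
    using assms(2) by (rule tendstoD)
  moreover have "\<forall>\<^sub>F h in at_right (0::real). 0 < h"
    by (simp add: eventually_at_right_less)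
  ultimately show ?thesis
    by eventually_elim (auto simp: dist_real_def abs_less_iff field_simps)
qed

text \<open>The comparison function \<open>g\<close> below solves \<open>g' = \<mu> g + \<beta> + \<delta>\<close>; just before a first
  crossing of \<open>u - g\<close> through zero, the left-hand bound on \<open>u\<close> would beat \<open>g\<close>, so there is none.\<close>

lemma left_dini_comparison_strict:
  fixes u :: "real \<Rightarrow> real"
  assumes cont: "continuous_on {a..b} u"
    and step: "\<And>t \<epsilon>. t \<in> {a<..b} \<Longrightarrow> 0 < \<epsilon> \<Longrightarrow>
      \<forall>\<^sub>F h in at_right 0. u t - h * (\<mu> * u t + \<beta> + \<epsilon>) \<le> u (t - h)"
    and "0 < \<delta>" and s: "s \<in> {a..b}"
  shows "u s < exp (\<mu> * (s - a)) * (u a + \<delta>) + (\<beta> + \<delta>) * int_exp \<mu> (s - a)"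
proof -
  define g where "g t = exp (\<mu> * (t - a)) * (u a + \<delta>) + (\<beta> + \<delta>) * int_exp \<mu> (t - a)" for t
  have g_deriv: "(g has_real_derivative \<mu> * g t + \<beta> + \<delta>) (at t)" for t
  proof -
    have "(g has_real_derivative
        \<mu> * exp (\<mu> * (t - a)) * (u a + \<delta>) + (\<beta> + \<delta>) * exp (\<mu> * (t - a))) (at t)"
      unfolding g_def by (auto intro!: derivative_eq_intros int_exp_diff_has_real_derivative)
    moreover have "exp (\<mu> * (t - a)) = \<mu> * int_exp \<mu> (t - a) + 1"
      by (simp add: mult_int_exp)
    ultimately show ?thesis
      unfolding g_def by (simp add: algebra_simps)
  qed
  define w where "w t = u t - g t" for t
  have "continuous_on {a..b} g"
    using g_deriv by (meson DERIV_isCont continuous_at_imp_continuous_on)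
  then have "continuous_on {a..b} w"
    unfolding w_def using cont by (intro continuous_intros)
  moreover have "w a < 0" using \<open>0 < \<delta>\<close> by (simp add: w_def g_def)
  moreover have "\<exists>h>0. h < t - a \<and> 0 \<le> w (t - h)" if t: "t \<in> {a<..b}" "0 \<le> w t" for t
  proof -
    have "\<forall>\<^sub>F h in at_right 0. h * \<mu> < 1"
      by (rule order_tendstoD(2)[of _ 0]) (auto intro!: tendsto_eq_intros)
    moreover have "\<forall>\<^sub>F h in at_right 0. 0 < h \<and> h < t - a"
      using t by (intro eventually_at_rightI[where b = "t - a"]) auto
    moreover have "\<forall>\<^sub>F h in at_right 0. u t - h * (\<mu> * u t + \<beta> + \<delta> / 2) \<le> u (t - h)"
      using step t(1) \<open>0 < \<delta>\<close> by simp
    moreover have "\<forall>\<^sub>F h in at_right 0. g (t - h) \<le> g t - h * (\<mu> * g t + \<beta> + \<delta>) + h * (\<delta> / 4)"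
      using DERIV_left_upper_bound[OF g_deriv, of "\<delta> / 4" t] \<open>0 < \<delta>\<close> by simp
    ultimately have "\<forall>\<^sub>F h in at_right 0. (0 < h \<and> h < t - a) \<and> 0 \<le> w (t - h)"
    proof eventually_elim
      case (elim h)
      then have "0 \<le> w t * (1 - h * \<mu>)" "0 < h * \<delta>" using t(2) \<open>0 < \<delta>\<close> by auto
      then show ?case using elim unfolding w_def by (simp add: algebra_simps)
    qed
    then show ?thesis using eventually_happens'[OF trivial_limit_at_right_real] by blast
  qed
  ultimately have "w s < 0" using s by (rule neg_on_interval_if_no_first_crossing)
  then show ?thesis by (simp add: w_def g_def)
qed

lemma left_dini_comparison:
  fixes u :: "real \<Rightarrow> real"
  assumes cont: "continuous_on {a..b} u"
    and step: "\<And>t \<epsilon>. t \<in> {a<..b} \<Longrightarrow> 0 < \<epsilon> \<Longrightarrow>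
      \<forall>\<^sub>F h in at_right 0. u t - h * (\<mu> * u t + \<beta> + \<epsilon>) \<le> u (t - h)"
    and s: "s \<in> {a..b}"
  shows "u s \<le> exp (\<mu> * (s - a)) * u a + \<beta> * int_exp \<mu> (s - a)"
proof (rule field_le_epsilon)
  define K where "K = exp (\<mu> * (s - a)) + int_exp \<mu> (s - a)"
  have "0 \<le> K" using s int_exp_nonneg[of "s - a" \<mu>] by (simp add: K_def add_nonneg_nonneg)
  fix e :: real assume "0 < e"
  define \<delta> where "\<delta> = e / (K + 1)"
  have "0 < \<delta>" "\<delta> * K \<le> e"
    using \<open>0 \<le> K\<close> \<open>0 < e\<close> by (simp_all add: \<delta>_def field_simps)
  moreover have "u s < exp (\<mu> * (s - a)) * u a + \<beta> * int_exp \<mu> (s - a) + \<delta> * K"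
    using left_dini_comparison_strict[OF cont step \<open>0 < \<delta>\<close> s] unfolding K_def
    by (simp add: algebra_simps)
  ultimately show "u s \<le> exp (\<mu> * (s - a)) * u a + \<beta> * int_exp \<mu> (s - a) + e"
    by linarith
qed

lemma vector_derivative_left_remainder:
  assumes "(y has_vector_derivative y') (at t within {a..b})" "t \<in> {a<..b}" "0 < \<epsilon>"
  shows "\<forall>\<^sub>F h in at_right 0. norm (y (t - h) - (y t - h *\<^sub>R y')) \<le> \<epsilon> * h"
proof -
  obtain d where "0 < d" and d: "\<And>s. s \<in> {a..b} \<Longrightarrow> norm (s - t) < d \<Longrightarrow>
      norm (y s - y t - (s - t) *\<^sub>R y') \<le> \<epsilon> * norm (s - t)"
    using assms(1,3) unfolding has_vector_derivative_def has_derivative_within_alt by blast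
  have "norm (y (t - h) - (y t - h *\<^sub>R y')) \<le> \<epsilon> * h" if "0 < h" "h < min d (t - a)" for h
    using d[of "t - h"] that assms(2) by (simp add: algebra_simps)
  then show ?thesis
    using \<open>0 < d\<close> assms(2) by (intro eventually_at_rightI[where b = "min d (t - a)"]) auto
qed

lemma pairing_bound_imp_norm_comparison:
  fixes y :: "real \<Rightarrow> 'v::euclidean_space"
  assumes N: "is_norm N" and wp: "compatible_weak_pairing wp N" and "0 \<le> \<beta>"
    and deriv: "\<And>t. t \<in> {a..b} \<Longrightarrow> (y has_vector_derivative y' t) (at t within {a..b})"
    and bound: "\<And>t. t \<in> {a<..b} \<Longrightarrow> wp (y' t) (y t) \<le> \<mu> * (N (y t))\<^sup>2 + \<beta> * N (y t)"
    and s: "s \<in> {a..b}"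
  shows "N (y s) \<le> exp (\<mu> * (s - a)) * N (y a) + \<beta> * int_exp \<mu> (s - a)"
proof (rule left_dini_comparison[OF _ _ s])
  obtain C where "0 < C" and C: "\<And>x. N x \<le> C * norm x" using is_norm_le_norm[OF N] by blast
  have "continuous_on {a..b} y"
    using deriv has_vector_derivative_continuous continuous_on_eq_continuous_within by blast
  then show "continuous_on {a..b} (\<lambda>t. N (y t))"
    by (rule continuous_on_compose2[OF is_norm_continuous_on[OF N]]) auto
  fix t \<epsilon> :: real assume t: "t \<in> {a<..b}" and "0 < \<epsilon>"
  have "\<forall>\<^sub>F h in at_right 0. N (y t) - h * (\<mu> * N (y t) + \<beta> + \<epsilon> / 2) \<le> N (y t - h *\<^sub>R y' t)"
    using pairing_bound_imp_norm_left_step[OF N wp bound[OF t] \<open>0 \<le> \<beta>\<close>] \<open>0 < \<epsilon>\<close> by simp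
  moreover have "\<forall>\<^sub>F h in at_right 0. norm (y (t - h) - (y t - h *\<^sub>R y' t)) \<le> \<epsilon> / (2 * C) * h"
    using vector_derivative_left_remainder[OF deriv t, of "\<epsilon> / (2 * C)"] t \<open>0 < \<epsilon>\<close> \<open>0 < C\<close> by simp
  ultimately show "\<forall>\<^sub>F h in at_right 0. N (y t) - h * (\<mu> * N (y t) + \<beta> + \<epsilon>) \<le> N (y (t - h))"
  proof eventually_elim
    case (elim h)
    have "N (y t - h *\<^sub>R y' t) - N (y (t - h)) \<le> N (y (t - h) - (y t - h *\<^sub>R y' t))"
      using is_norm_diff_ge[OF N] is_norm_minus_commute[OF N] by metis
    also have "\<dots> \<le> C * norm (y (t - h) - (y t - h *\<^sub>R y' t))"
      by (rule C)
    also have "\<dots> \<le> C * (\<epsilon> / (2 * C) * h)"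
      using elim(2) \<open>0 < C\<close> by (intro mult_left_mono) auto
    also have "\<dots> = h * (\<epsilon> / 2)" using \<open>0 < C\<close> by simp
    finally show ?case using elim(1) by (simp add: algebra_simps)
  qed
qed

lemma real_of_ereal_SUP_nonneg:
  fixes h :: "'i \<Rightarrow> ereal"
  assumes "\<And>i. i \<in> I \<Longrightarrow> 0 \<le> h i"
  shows "0 \<le> real_of_ereal (SUP i\<in>I. h i)"
proof (cases "I = {}")
  case False
  then obtain i where "i \<in> I" by blast
  then have "0 \<le> (SUP i\<in>I. h i)" using assms by (meson SUP_upper2)
  then show ?thesis by (rule real_of_ereal_pos)
qed (simp add: bot_ereal_def)

lemma Lip_z_nonneg: "is_norm NW \<Longrightarrow> is_norm NZ \<Longrightarrow> 0 \<le> real_of_ereal (Lip_z F NW NZ X Z)"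
  unfolding Lip_z_def by (rule real_of_ereal_SUP_nonneg) (auto simp: is_norm_nonneg)

lemma Lip_x_nonneg: "is_norm NW \<Longrightarrow> is_norm NX \<Longrightarrow> 0 \<le> real_of_ereal (Lip_x F NW NX X Z)"
  unfolding Lip_x_def by (rule real_of_ereal_SUP_nonneg) (auto simp: is_norm_nonneg)

lemma Lip_z_le:
  assumes NW: "is_norm NW" and NZ: "is_norm NZ" and fin: "Lip_z F NW NZ X Z < \<infinity>"
    and "x \<in> X" "z1 \<in> Z" "z2 \<in> Z"
  shows "NW (F x z1 - F x z2) \<le> real_of_ereal (Lip_z F NW NZ X Z) * NZ (z1 - z2)"
proof (cases "z1 = z2")
  case False
  have "ereal (NW (F x z1 - F x z2) / NZ (z1 - z2)) \<le> Lip_z F NW NZ X Z"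
    unfolding Lip_z_def using assms(4-6) False by (intro SUP_upper2[where i = "(x, z1, z2)"]) auto
  then have "NW (F x z1 - F x z2) / NZ (z1 - z2) \<le> real_of_ereal (Lip_z F NW NZ X Z)"
    using fin by (auto simp: ereal_le_real_iff)
  then show ?thesis using is_norm_pos[OF NZ, of "z1 - z2"] False by (simp add: divide_le_eq)
qed (simp add: is_norm_zero[OF NW] is_norm_zero[OF NZ])

lemma Lip_x_le:
  assumes NW: "is_norm NW" and NX: "is_norm NX" and fin: "Lip_x F NW NX X Z < \<infinity>"
    and "x1 \<in> X" "x2 \<in> X" "z \<in> Z"
  shows "NW (F x1 z - F x2 z) \<le> real_of_ereal (Lip_x F NW NX X Z) * NX (x1 - x2)"
proof (cases "x1 = x2")
  case False
  have "ereal (NW (F x1 z - F x2 z) / NX (x1 - x2)) \<le> Lip_x F NW NX X Z"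
    unfolding Lip_x_def using assms(4-6) False by (intro SUP_upper2[where i = "(z, x1, x2)"]) auto
  then have "NW (F x1 z - F x2 z) / NX (x1 - x2) \<le> real_of_ereal (Lip_x F NW NX X Z)"
    using fin by (auto simp: ereal_le_real_iff)
  then show ?thesis using is_norm_pos[OF NX, of "x1 - x2"] False by (simp add: divide_le_eq)
qed (simp add: is_norm_zero[OF NW] is_norm_zero[OF NX])

lemma osLip_x_le:
  assumes NX: "is_norm NX" and wp: "compatible_weak_pairing wp NX"
    and bound: "osLip_x F wp NX X Z \<le> ereal c" and "x1 \<in> X" "x2 \<in> X" "z \<in> Z"
  shows "wp (F x1 z - F x2 z) (x1 - x2) \<le> c * (NX (x1 - x2))\<^sup>2"
proof (cases "x1 = x2")
  case False
  have "ereal (wp (F x1 z - F x2 z) (x1 - x2) / (NX (x1 - x2))\<^sup>2) \<le> osLip_x F wp NX X Z"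
    unfolding osLip_x_def using assms(4-6) False by (intro SUP_upper2[where i = "(z, x1, x2)"]) auto
  then have "wp (F x1 z - F x2 z) (x1 - x2) / (NX (x1 - x2))\<^sup>2 \<le> c"
    using bound by (metis ereal_less_eq(3) order_trans)
  then show ?thesis using is_norm_pos[OF NX, of "x1 - x2"] False by (simp add: divide_le_eq)
qed (simp add: pairing_zero_right[OF NX wp] is_norm_zero[OF NX])

lemma osLip_le:
  assumes NX: "is_norm NX" and wp: "compatible_weak_pairing wp NX"
    and bound: "osLip F wp NX X \<le> ereal c" and "x1 \<in> X" "x2 \<in> X"
  shows "wp (F x1 - F x2) (x1 - x2) \<le> c * (NX (x1 - x2))\<^sup>2"
proof (cases "x1 = x2")
  case False
  have "ereal (wp (F x1 - F x2) (x1 - x2) / (NX (x1 - x2))\<^sup>2) \<le> osLip F wp NX X"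
    unfolding osLip_def using assms(4-5) False by (intro SUP_upper2[where i = "(x1, x2)"]) auto
  then have "wp (F x1 - F x2) (x1 - x2) / (NX (x1 - x2))\<^sup>2 \<le> c"
    using bound by (metis ereal_less_eq(3) order_trans)
  then show ?thesis using is_norm_pos[OF NX, of "x1 - x2"] False by (simp add: divide_le_eq)
qed (simp add: pairing_zero_right[OF NX wp] is_norm_zero[OF NX])

text \<open>For a nonnegative matrix with \<open>m22 < 1\<close>, the determinant condition says that its spectral
  radius is below one.\<close>

lemma nonneg_matrix_weighted_contraction:
  fixes m11 m12 m21 m22 :: real
  assumes "0 \<le> m12" "0 \<le> m21" "0 \<le> m22" "m22 < 1"
    and det: "m12 * m21 < (1 - m11) * (1 - m22)"
  obtains w1 w2 l where "0 < w1" "0 < w2" "0 < l" "l < 1"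
    "w1 * m11 + w2 * m21 \<le> l * w1" "w1 * m12 + w2 * m22 \<le> l * w2"
proof -
  define \<Delta> where "\<Delta> = (1 - m11) * (1 - m22) - m12 * m21"
  define w1 where "w1 = 1 - m22"
  define s where "s = \<Delta> / (2 * (m21 + 1))"
  define w2 where "w2 = m12 + s"
  define l where "l = max (1 / 2) (max ((w1 * m11 + w2 * m21) / w1) ((w1 * m12 + w2 * m22) / w2))"
  have "0 < \<Delta>" using det by (simp add: \<Delta>_def)
  then have "0 < s" using assms(2) by (simp add: s_def)
  then have "0 < w1" "0 < w2" using assms by (simp_all add: w1_def w2_def)
  have "s * m21 \<le> \<Delta> / 2"
    using \<open>0 < \<Delta>\<close> assms(2) by (simp add: s_def field_simps)
  then have "w1 * m11 + w2 * m21 < w1"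
    using \<open>0 < \<Delta>\<close> by (simp add: w1_def w2_def \<Delta>_def algebra_simps)
  moreover have "w1 * m12 + w2 * m22 < w2"
    using \<open>0 < s\<close> assms(4) by (simp add: w1_def w2_def algebra_simps)
  ultimately have "l < 1" using \<open>0 < w1\<close> \<open>0 < w2\<close> by (simp add: l_def)
  have "(w1 * m11 + w2 * m21) / w1 \<le> l" "(w1 * m12 + w2 * m22) / w2 \<le> l"
    by (simp_all add: l_def)
  then have "w1 * m11 + w2 * m21 \<le> l * w1" "w1 * m12 + w2 * m22 \<le> l * w2"
    using \<open>0 < w1\<close> \<open>0 < w2\<close> by (simp_all add: pos_divide_le_eq)
  moreover have "0 < l" by (simp add: l_def)
  ultimately show ?thesis using that \<open>0 < w1\<close> \<open>0 < w2\<close> \<open>l < 1\<close> by blast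
qed

lemma coupled_recursion_geometric_decay:
  fixes u v :: "nat \<Rightarrow> real"
  assumes w: "0 < w1" "0 < w2" "0 \<le> l"
    and contraction: "w1 * m11 + w2 * m21 \<le> l * w1" "w1 * m12 + w2 * m22 \<le> l * w2"
    and nonneg: "\<And>k. 0 \<le> u k" "\<And>k. 0 \<le> v k"
    and rec: "\<And>k. u (Suc k) \<le> m11 * u k + m12 * v k" "\<And>k. v (Suc k) \<le> m21 * u k + m22 * v k"
  shows "u k + v k \<le> max w1 w2 / min w1 w2 * l ^ k * (u 0 + v 0)"
proof -
  define W where "W k = w1 * u k + w2 * v k" for k
  have "W (Suc k) \<le> l * W k" for k
  proof -
    have "W (Suc k) \<le> w1 * (m11 * u k + m12 * v k) + w2 * (m21 * u k + m22 * v k)"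
      unfolding W_def using rec w by (intro add_mono mult_left_mono) auto
    also have "\<dots> = (w1 * m11 + w2 * m21) * u k + (w1 * m12 + w2 * m22) * v k"
      by (simp add: algebra_simps)
    also have "\<dots> \<le> (l * w1) * u k + (l * w2) * v k"
      using contraction nonneg by (intro add_mono mult_right_mono) auto
    finally show ?thesis by (simp add: W_def algebra_simps)
  qed
  then have "W k \<le> l ^ k * W 0" for k
  proof (induction k)
    case (Suc k)
    then show ?case
      using order_trans[OF Suc.prems[of k] mult_left_mono[OF Suc.IH \<open>0 \<le> l\<close>]]
      by (simp add: mult.assoc)
  qed simp
  moreover have "min w1 w2 * (u k + v k) \<le> W k"
    using nonneg[of k] unfolding W_def
    by (simp add: distrib_left add_mono mult_right_mono)
  moreover have "W 0 \<le> max w1 w2 * (u 0 + v 0)"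
    using nonneg[of 0] unfolding W_def
    by (simp add: distrib_left add_mono mult_right_mono)
  ultimately have "min w1 w2 * (u k + v k) \<le> l ^ k * (max w1 w2 * (u 0 + v 0))"
    using \<open>0 \<le> l\<close> by (meson mult_left_mono order_trans zero_le_power)
  then show ?thesis using w by (simp add: field_simps)
qed

text \<open>\<open>crossing_time \<xi> q\<close> is the time at which \<open>int_exp \<xi>\<close> reaches \<open>q\<close>; it is \<open>\<infinity>\<close> if
  \<open>int_exp \<xi>\<close> stays below \<open>q\<close>, which happens when \<open>\<xi> < 0\<close> and \<open>q \<ge> -1 / \<xi>\<close>.\<close>

definition crossing_time :: "real \<Rightarrow> real \<Rightarrow> ereal" where
  "crossing_time \<xi> q =
     (if \<xi> = 0 then ereal q else if \<xi> * q + 1 \<le> 0 then \<infinity> else ereal (ln (\<xi> * q + 1) / \<xi>))"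

lemma T_crit_eq_crossing_time:
  "T_crit \<xi> \<zeta> C1 C2 L n = crossing_time \<xi> ((1 - L ^ n) / (C2 + C1 / \<zeta>))"
  by (simp add: T_crit_def crossing_time_def Let_def)

lemma crossing_time_pos:
  assumes "0 < q"
  shows "0 < crossing_time \<xi> q"
proof -
  have "0 < ln (\<xi> * q + 1) / \<xi>" if "\<xi> \<noteq> 0" "0 < \<xi> * q + 1"
  proof (cases "0 < \<xi>")
    case True
    then have "0 < ln (\<xi> * q + 1)" using assms by (intro ln_gt_zero) simp
    then show ?thesis using True by simp
  next
    case False
    then have "\<xi> < 0" using that(1) by simp
    then have "ln (\<xi> * q + 1) < 0" using assms that(2) by (simp add: mult_neg_pos)
    then show ?thesis using \<open>\<xi> < 0\<close> by (simp add: divide_neg_neg)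
  qed
  then show ?thesis using assms by (simp add: crossing_time_def)
qed

lemma less_crossing_time_imp_int_exp_less:
  assumes "0 < q" and T: "ereal T < crossing_time \<xi> q"
  shows "int_exp \<xi> T < q"
proof -
  consider "\<xi> = 0" | "\<xi> < 0" "\<xi> * q + 1 \<le> 0" | "0 < \<xi>" | "\<xi> < 0" "0 < \<xi> * q + 1"
    by fastforce
  then show ?thesis
  proof cases
    case 1
    then show ?thesis using T by (simp add: crossing_time_def int_exp_def)
  next
    case 2
    then have "\<xi> * q < exp (\<xi> * T) - 1" using exp_gt_zero[of "\<xi> * T"] by linarith
    then have "\<xi> * q < \<xi> * int_exp \<xi> T" by (simp add: mult_int_exp)
    then show ?thesis using \<open>\<xi> < 0\<close> by simp
  next
    case 3
    moreover have "0 < \<xi> * q + 1" using 3 \<open>0 < q\<close> by (simp add: add_pos_pos)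
    ultimately have "\<xi> * T < ln (\<xi> * q + 1)"
      using T by (simp add: crossing_time_def pos_less_divide_eq mult.commute)
    then have "exp (\<xi> * T) < \<xi> * q + 1"
      using \<open>0 < \<xi> * q + 1\<close> by (metis exp_less_mono exp_ln)
    then have "\<xi> * int_exp \<xi> T < \<xi> * q" using mult_int_exp[of \<xi> T] by simp
    then show ?thesis using 3 by (simp add: mult_less_cancel_left_pos)
  next
    case 4
    then have "ln (\<xi> * q + 1) < \<xi> * T"
      using T by (simp add: crossing_time_def neg_less_divide_eq mult.commute)
    then have "\<xi> * q + 1 < exp (\<xi> * T)"
      using 4 by (metis exp_less_mono exp_ln)
    then have "\<xi> * q < \<xi> * int_exp \<xi> T" using mult_int_exp[of \<xi> T] by simp
    then show ?thesis using 4 by (simp add: mult_less_cancel_left_neg)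
  qed
qed

lemma nat_floor_divide_bounds:
  fixes t T :: real
  assumes "0 \<le> t" "0 < T"
  shows "real (nat \<lfloor>t / T\<rfloor>) * T \<le> t" "t \<le> real (Suc (nat \<lfloor>t / T\<rfloor>)) * T"
proof -
  have k: "real (nat \<lfloor>t / T\<rfloor>) = of_int \<lfloor>t / T\<rfloor>" using assms by simp
  show "real (nat \<lfloor>t / T\<rfloor>) * T \<le> t"
    using of_int_floor_le[of "t / T"] assms unfolding k by (simp add: le_divide_eq)
  show "t \<le> real (Suc (nat \<lfloor>t / T\<rfloor>)) * T"
    using real_of_int_floor_add_one_gt[of "t / T"] assms unfolding of_nat_Suc k
    by (simp add: divide_less_eq algebra_simps)
qed

lemma power_nat_floor_le_exp:
  fixes l t T :: real
  assumes "0 < l" "l < 1" "0 \<le> t" "0 < T"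
  shows "l ^ nat \<lfloor>t / T\<rfloor> \<le> exp (ln l / T * t) / l"
proof -
  have "t / T - 1 \<le> real (nat \<lfloor>t / T\<rfloor>)"
    using real_of_int_floor_add_one_gt[of "t / T"] assms by linarith
  then have "real (nat \<lfloor>t / T\<rfloor>) * ln l \<le> (t / T - 1) * ln l"
    using assms by (intro mult_right_mono_neg) auto
  moreover have "l ^ nat \<lfloor>t / T\<rfloor> = exp (real (nat \<lfloor>t / T\<rfloor>) * ln l)"
    using assms(1) by (simp add: exp_of_nat_mult)
  ultimately have "l ^ nat \<lfloor>t / T\<rfloor> \<le> exp ((t / T - 1) * ln l)"
    by simp
  also have "\<dots> = exp (ln l / T * t) / l"
    using assms by (simp add: exp_diff algebra_simps)
  finally show ?thesis .
qed

lemma eta_norm_one_le_add: "0 \<le> u \<Longrightarrow> 0 \<le> v \<Longrightarrow> eta_norm 1 1 u v \<le> u + v"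
  unfolding eta_norm_def by (rule real_le_lsqrt) (auto simp: power2_eq_square algebra_simps)

lemma add_le_sqrt_2_eta_norm_one: "u + v \<le> sqrt 2 * eta_norm 1 1 u v"
proof -
  have "(u + v)\<^sup>2 \<le> 2 * (u\<^sup>2 + v\<^sup>2)"
    using sum_squares_ge_zero[of "u - v" 0] by (simp add: power2_eq_square algebra_simps)
  then have "u + v \<le> sqrt (2 * (u\<^sup>2 + v\<^sup>2))" by (rule real_le_rsqrt)
  also have "\<dots> = sqrt 2 * eta_norm 1 1 u v" unfolding eta_norm_def real_sqrt_mult by simp
  finally show ?thesis .
qed

locale sampled_interconnection =
  fixes nX :: "'x::euclidean_space \<Rightarrow> real" and nZ :: "'z::real_vector \<Rightarrow> real"
    and wp :: "'x \<Rightarrow> 'x \<Rightarrow> real"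
    and X :: "'x set" and Z :: "'z set"
    and f :: "'x \<Rightarrow> 'z \<Rightarrow> 'x" and G :: "'x \<Rightarrow> 'z \<Rightarrow> 'z"
    and Lxf Lzf LxG LzG \<xi> \<zeta> :: real
  assumes norm_X: "is_norm nX" and norm_Z: "is_norm nZ"
    and pairing: "compatible_weak_pairing wp nX"
    and zero_X: "0 \<in> X" and zero_Z: "0 \<in> Z"
    and G_into: "\<And>x z. x \<in> X \<Longrightarrow> z \<in> Z \<Longrightarrow> G x z \<in> Z"
    and f_zero: "f 0 0 = 0" and G_zero: "G 0 0 = 0"
    and f_lip_x: "\<And>x1 x2 z. x1 \<in> X \<Longrightarrow> x2 \<in> X \<Longrightarrow> z \<in> Z \<Longrightarrow>
      nX (f x1 z - f x2 z) \<le> Lxf * nX (x1 - x2)"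
    and f_lip_z: "\<And>x z1 z2. x \<in> X \<Longrightarrow> z1 \<in> Z \<Longrightarrow> z2 \<in> Z \<Longrightarrow>
      nX (f x z1 - f x z2) \<le> Lzf * nZ (z1 - z2)"
    and G_lip_x: "\<And>x1 x2 z. x1 \<in> X \<Longrightarrow> x2 \<in> X \<Longrightarrow> z \<in> Z \<Longrightarrow>
      nZ (G x1 z - G x2 z) \<le> LxG * nX (x1 - x2)"
    and G_lip_z: "\<And>x z1 z2. x \<in> X \<Longrightarrow> z1 \<in> Z \<Longrightarrow> z2 \<in> Z \<Longrightarrow>
      nZ (G x z1 - G x z2) \<le> LzG * nZ (z1 - z2)"
    and Lxf_nonneg: "0 \<le> Lxf" and Lzf_nonneg: "0 \<le> Lzf" and LxG_nonneg: "0 \<le> LxG"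
    and LzG_nonneg: "0 \<le> LzG" and LzG_less_1: "LzG < 1"
    and fixed_point_exists: "\<And>x. x \<in> X \<Longrightarrow> \<exists>z\<in>Z. G x z = z"
    and f_oslip_x: "\<And>x1 x2 z. x1 \<in> X \<Longrightarrow> x2 \<in> X \<Longrightarrow> z \<in> Z \<Longrightarrow>
      wp (f x1 z - f x2 z) (x1 - x2) \<le> \<xi> * (nX (x1 - x2))\<^sup>2"
    and zeta_pos: "0 < \<zeta>"
    and reduced_oslip: "\<And>x1 x2. x1 \<in> X \<Longrightarrow> x2 \<in> X \<Longrightarrow>
      wp (f x1 (THE z. z \<in> Z \<and> G x1 z = z) - f x2 (THE z. z \<in> Z \<and> G x2 z = z)) (x1 - x2)
        \<le> - \<zeta> * (nX (x1 - x2))\<^sup>2"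
begin

definition zstar :: "'x \<Rightarrow> 'z" where
  "zstar x = (THE z. z \<in> Z \<and> G x z = z)"

definition L_zstar :: real where
  "L_zstar = LxG / (1 - LzG)"

definition L_reduced :: real where
  "L_reduced = Lxf + Lzf * L_zstar"

lemma L_zstar_nonneg: "0 \<le> L_zstar"
  using LxG_nonneg LzG_less_1 by (simp add: L_zstar_def)

lemma L_reduced_nonneg: "0 \<le> L_reduced"
  using Lxf_nonneg Lzf_nonneg L_zstar_nonneg by (simp add: L_reduced_def)

lemma fixed_point_unique:
  assumes "x \<in> X" "z1 \<in> Z" "z2 \<in> Z" "G x z1 = z1" "G x z2 = z2"
  shows "z1 = z2"
proof -
  have "(1 - LzG) * nZ (z1 - z2) \<le> 0"
    using G_lip_z[OF assms(1-3)] assms(4,5) by (simp add: algebra_simps)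
  then have "nZ (z1 - z2) = 0"
    using LzG_less_1 is_norm_nonneg[OF norm_Z, of "z1 - z2"] by (simp add: mult_le_0_iff)
  then show ?thesis using is_norm_eq_0_iff[OF norm_Z] by simp
qed

lemma zstar_in_Z: "x \<in> X \<Longrightarrow> zstar x \<in> Z"
  and G_zstar: "x \<in> X \<Longrightarrow> G x (zstar x) = zstar x"
proof -
  assume "x \<in> X"
  then have "\<exists>!z. z \<in> Z \<and> G x z = z"
    using fixed_point_exists fixed_point_unique by blast
  then have "zstar x \<in> Z \<and> G x (zstar x) = zstar x"
    unfolding zstar_def by (rule theI')
  then show "zstar x \<in> Z" "G x (zstar x) = zstar x" by auto
qed

lemma zstar_zero: "zstar 0 = 0"
  using fixed_point_unique[OF zero_X zstar_in_Z[OF zero_X] zero_Z] G_zstar[OF zero_X] G_zero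
  by blast

lemma zstar_lipschitz:
  assumes "x1 \<in> X" "x2 \<in> X"
  shows "nZ (zstar x1 - zstar x2) \<le> L_zstar * nX (x1 - x2)"
proof -
  have "nZ (zstar x1 - zstar x2) = nZ (G x1 (zstar x1) - G x2 (zstar x2))"
    using G_zstar assms by simp
  also have "\<dots> \<le> nZ (G x1 (zstar x1) - G x2 (zstar x1)) + nZ (G x2 (zstar x1) - G x2 (zstar x2))"
    by (rule is_norm_triangle_diff[OF norm_Z])
  also have "\<dots> \<le> LxG * nX (x1 - x2) + LzG * nZ (zstar x1 - zstar x2)"
    using G_lip_x G_lip_z assms zstar_in_Z by (intro add_mono) auto
  finally have "(1 - LzG) * nZ (zstar x1 - zstar x2) \<le> LxG * nX (x1 - x2)"
    by (simp add: algebra_simps)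
  then show ?thesis using LzG_less_1 by (simp add: L_zstar_def field_simps)
qed

lemma zstar_bound: "x \<in> X \<Longrightarrow> nZ (zstar x) \<le> L_zstar * nX x"
  using zstar_lipschitz[OF _ zero_X] by (simp add: zstar_zero)

lemma reduced_field_contracting: "x \<in> X \<Longrightarrow> wp (f x (zstar x)) x \<le> - \<zeta> * (nX x)\<^sup>2"
  using reduced_oslip[OF _ zero_X] by (simp add: zstar_def[symmetric] zstar_zero f_zero)

lemma f_bound:
  assumes "x \<in> X" "z \<in> Z"
  shows "nX (f x z) \<le> Lzf * nZ (z - zstar x) + L_reduced * nX x"
proof -
  have "nX (f x z) \<le> nX (f x z - f x (zstar x)) + nX (f x (zstar x) - f 0 (zstar x)) +
      nX (f 0 (zstar x) - f 0 0)"
    using is_norm_triangle_diff[OF norm_X]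
      is_norm_triangle_diff[OF norm_X, of "f x z" "f 0 (zstar x)"]
    by (metis add_right_mono diff_zero f_zero order_trans)
  also have "\<dots> \<le> Lzf * nZ (z - zstar x) + Lxf * nX x + Lzf * nZ (zstar x)"
    using f_lip_z[OF assms zstar_in_Z[OF assms(1)]]
      f_lip_x[OF assms(1) zero_X zstar_in_Z[OF assms(1)]]
      f_lip_z[OF zero_X zstar_in_Z[OF assms(1)] zero_Z]
    by (intro add_mono) auto
  also have "\<dots> \<le> Lzf * nZ (z - zstar x) + Lxf * nX x + Lzf * (L_zstar * nX x)"
    using zstar_bound[OF assms(1)] Lzf_nonneg by (intro add_left_mono mult_left_mono)
  finally show ?thesis by (simp add: L_reduced_def algebra_simps)
qed

lemma Giter_in_Z: "x \<in> X \<Longrightarrow> z \<in> Z \<Longrightarrow> Giter G m x z \<in> Z"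
  by (induction m) (simp_all add: Giter_def G_into)

lemma Giter_zstar_contraction:
  assumes "x \<in> X" "z \<in> Z"
  shows "nZ (Giter G m x z - zstar x) \<le> LzG ^ m * nZ (z - zstar x)"
proof (induction m)
  case (Suc m)
  have "nZ (Giter G (Suc m) x z - zstar x) = nZ (G x (Giter G m x z) - G x (zstar x))"
    using G_zstar[OF assms(1)] by (simp add: Giter_def)
  also have "\<dots> \<le> LzG * nZ (Giter G m x z - zstar x)"
    using G_lip_z assms Giter_in_Z zstar_in_Z by blast
  also have "\<dots> \<le> LzG * (LzG ^ m * nZ (z - zstar x))"
    using Suc LzG_nonneg by (rule mult_left_mono)
  finally show ?case by simp
qed (simp add: Giter_def)

context
  fixes a b :: real and z :: 'z and x :: "real \<Rightarrow> 'x"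
  assumes z: "z \<in> Z" and x_in: "\<And>s. s \<in> {a..b} \<Longrightarrow> x s \<in> X"
    and x_deriv: "\<And>s. s \<in> {a..b} \<Longrightarrow> (x has_vector_derivative f (x s) z) (at s within {a..b})"
begin

lemma period_drift:
  assumes "s \<in> {a..b}"
  shows "nX (x s - x a) \<le> int_exp \<xi> (s - a) * nX (f (x a) z)"
proof -
  have a: "x a \<in> X" using x_in assms by auto
  have "nX (x s - x a) \<le> exp (\<xi> * (s - a)) * nX (x a - x a) + nX (f (x a) z) * int_exp \<xi> (s - a)"
  proof (rule pairing_bound_imp_norm_comparison[OF norm_X pairing is_norm_nonneg[OF norm_X] _ _
        assms])
    fix t assume "t \<in> {a..b}"
    then show "((\<lambda>t. x t - x a) has_vector_derivative f (x t) z) (at t within {a..b})"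
      using x_deriv by (auto intro!: derivative_eq_intros)
  next
    fix t assume "t \<in> {a<..b}"
    then have t: "x t \<in> X" using x_in by auto
    have "wp (f (x t) z) (x t - x a)
        \<le> wp (f (x t) z - f (x a) z) (x t - x a) + wp (f (x a) z) (x t - x a)"
      using pairing_add_left[OF norm_X pairing, of "f (x t) z - f (x a) z" "f (x a) z"] by simp
    also have "\<dots> \<le> \<xi> * (nX (x t - x a))\<^sup>2 + nX (f (x a) z) * nX (x t - x a)"
      using f_oslip_x[OF t a z] pairing_le_norm_mult[OF norm_X pairing] by (rule add_mono)
    finally show "wp (f (x t) z) (x t - x a)
        \<le> \<xi> * (nX (x t - x a))\<^sup>2 + nX (f (x a) z) * nX (x t - x a)" .
  qed
  then show ?thesis by (simp add: is_norm_zero[OF norm_X] mult.commute)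
qed

lemma period_endpoint:
  assumes E: "\<And>s. s \<in> {a..b} \<Longrightarrow> nZ (z - zstar (x s)) \<le> E" and s: "s \<in> {a..b}"
  shows "nX (x s) \<le> exp (- \<zeta> * (s - a)) * nX (x a) + Lzf * E * int_exp (- \<zeta>) (s - a)"
proof (rule pairing_bound_imp_norm_comparison[OF norm_X pairing _ x_deriv _ s])
  show "0 \<le> Lzf * E"
    using E[of a] s is_norm_nonneg[OF norm_Z] Lzf_nonneg by (meson atLeastAtMost_iff order_refl
        order_trans mult_nonneg_nonneg)
next
  fix t assume "t \<in> {a<..b}"
  then have t: "t \<in> {a..b}" "x t \<in> X" using x_in by auto
  let ?F = "f (x t) (zstar (x t))"
  have "wp (f (x t) z) (x t) \<le> wp ?F (x t) + wp (f (x t) z - ?F) (x t)"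
    using pairing_add_left[OF norm_X pairing, of ?F "f (x t) z - ?F"] by simp
  also have "\<dots> \<le> - \<zeta> * (nX (x t))\<^sup>2 + nX (f (x t) z - ?F) * nX (x t)"
    using reduced_field_contracting[OF t(2)] pairing_le_norm_mult[OF norm_X pairing]
    by (rule add_mono)
  also have "\<dots> \<le> - \<zeta> * (nX (x t))\<^sup>2 + Lzf * E * nX (x t)"
  proof -
    have "nX (f (x t) z - ?F) \<le> Lzf * E"
      using f_lip_z[OF t(2) z zstar_in_Z[OF t(2)]] E[OF t(1)] Lzf_nonneg
      by (meson mult_left_mono order_trans)
    then show ?thesis using is_norm_nonneg[OF norm_X] by (simp add: mult_right_mono)
  qed
  finally show "wp (f (x t) z) (x t) \<le> - \<zeta> * (nX (x t))\<^sup>2 + Lzf * E * nX (x t)" .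
qed

end

definition x_sample :: "(real \<Rightarrow> 'x) \<Rightarrow> real \<Rightarrow> nat \<Rightarrow> real" where
  "x_sample x T k = nX (x (real k * T))"

definition z_gap :: "(real \<Rightarrow> 'x) \<Rightarrow> (nat \<Rightarrow> 'z) \<Rightarrow> real \<Rightarrow> nat \<Rightarrow> real" where
  "z_gap x zd T k = nZ (zd k - zstar (x (real k * T)))"

definition period_gap_bound :: "(real \<Rightarrow> 'x) \<Rightarrow> (nat \<Rightarrow> 'z) \<Rightarrow> real \<Rightarrow> nat \<Rightarrow> real" where
  "period_gap_bound x zd T k = z_gap x zd T k +
     L_zstar * int_exp \<xi> T * (Lzf * z_gap x zd T k + L_reduced * x_sample x T k)"

lemma x_sample_nonneg: "0 \<le> x_sample x T k"
  by (simp add: x_sample_def is_norm_nonneg[OF norm_X])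

lemma z_gap_nonneg: "0 \<le> z_gap x zd T k"
  by (simp add: z_gap_def is_norm_nonneg[OF norm_Z])

context
  fixes T :: real and n :: nat and x :: "real \<Rightarrow> 'x" and zm1 :: 'z and zd :: "nat \<Rightarrow> 'z"
  assumes sol: "interconnected_solution f G X Z T n x zm1 zd" and T_pos: "0 < T"
begin

lemma solution_in_X: "0 \<le> t \<Longrightarrow> x t \<in> X"
  using sol by (simp add: interconnected_solution_def)

lemma solution_zd_in_Z: "zd k \<in> Z"
proof (induction k)
  case 0
  then show ?case
    using sol solution_in_X[of 0] by (simp add: interconnected_solution_def Giter_in_Z)
next
  case (Suc k)
  then show ?case using sol solution_in_X[of "real (Suc k) * T"] T_pos
    by (simp add: interconnected_solution_def Giter_in_Z)
qed

lemma solution_on_period: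
  assumes "s \<in> {real k * T .. real (Suc k) * T}"
  shows "x s \<in> X"
    and "(x has_vector_derivative f (x s) (zd k)) (at s within {real k * T .. real (Suc k) * T})"
proof -
  have "0 \<le> real k * T" using T_pos by simp
  then show "x s \<in> X" using assms by (intro solution_in_X) auto
  show "(x has_vector_derivative f (x s) (zd k)) (at s within {real k * T .. real (Suc k) * T})"
    using sol assms by (simp add: interconnected_solution_def)
qed

lemma sampled_drift:
  assumes "s \<in> {real k * T .. real (Suc k) * T}"
  shows "nX (x s - x (real k * T))
    \<le> int_exp \<xi> T * (Lzf * z_gap x zd T k + L_reduced * x_sample x T k)"
proof -
  have a: "x (real k * T) \<in> X" using solution_in_X T_pos by simp
  have "nX (x s - x (real k * T)) \<le> int_exp \<xi> (s - real k * T) * nX (f (x (real k * T)) (zd k))"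
    using period_drift[OF solution_zd_in_Z solution_on_period assms] .
  also have "\<dots> \<le> int_exp \<xi> T * (Lzf * z_gap x zd T k + L_reduced * x_sample x T k)"
    using assms T_pos f_bound[OF a solution_zd_in_Z] is_norm_nonneg[OF norm_X]
      int_exp_nonneg[of T \<xi>]
    unfolding x_sample_def z_gap_def by (intro mult_mono int_exp_mono) (auto simp: algebra_simps)
  finally show ?thesis .
qed

lemma sampled_gap_bound:
  assumes "s \<in> {real k * T .. real (Suc k) * T}"
  shows "nZ (zd k - zstar (x s)) \<le> period_gap_bound x zd T k"
proof -
  let ?a = "real k * T"
  have "nZ (zd k - zstar (x s)) \<le> z_gap x zd T k + L_zstar * nX (x s - x ?a)"
    using is_norm_triangle_diff[OF norm_Z, of "zd k" "zstar (x s)" "zstar (x ?a)"]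
      zstar_lipschitz[OF solution_on_period(1)[OF assms] solution_in_X[of ?a]] T_pos
      is_norm_minus_commute[OF norm_Z, of "zstar (x ?a)"]
    unfolding z_gap_def by simp
  moreover have "L_zstar * nX (x s - x ?a)
      \<le> L_zstar * (int_exp \<xi> T * (Lzf * z_gap x zd T k + L_reduced * x_sample x T k))"
    by (rule mult_left_mono[OF sampled_drift[OF assms] L_zstar_nonneg])
  ultimately show ?thesis unfolding period_gap_bound_def mult.assoc by linarith
qed

lemma sampled_step:
  "x_sample x T (Suc k)
     \<le> exp (- \<zeta> * T) * x_sample x T k + Lzf * period_gap_bound x zd T k * int_exp (- \<zeta>) T"
  "z_gap x zd T (Suc k) \<le> LzG ^ n * period_gap_bound x zd T k"
proof -
  let ?b = "real (Suc k) * T"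
  have b: "?b \<in> {real k * T .. ?b}" and "?b - real k * T = T"
    using T_pos by (auto simp: algebra_simps)
  show "x_sample x T (Suc k)
      \<le> exp (- \<zeta> * T) * x_sample x T k + Lzf * period_gap_bound x zd T k * int_exp (- \<zeta>) T"
    using period_endpoint[OF solution_zd_in_Z solution_on_period sampled_gap_bound b]
    unfolding x_sample_def \<open>?b - real k * T = T\<close> .
  have "z_gap x zd T (Suc k) = nZ (Giter G n (x ?b) (zd k) - zstar (x ?b))"
    using sol unfolding z_gap_def interconnected_solution_def by simp
  also have "\<dots> \<le> LzG ^ n * nZ (zd k - zstar (x ?b))"
    using Giter_zstar_contraction solution_on_period(1)[OF b] solution_zd_in_Z by blast
  also have "\<dots> \<le> LzG ^ n * period_gap_bound x zd T k"
    using sampled_gap_bound[OF b] LzG_nonneg by (intro mult_left_mono) auto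
  finally show "z_gap x zd T (Suc k) \<le> LzG ^ n * period_gap_bound x zd T k" .
qed

lemma state_le_sampled:
  assumes "s \<in> {real k * T .. real (Suc k) * T}"
  shows "nX (x s) + nZ (zd k)
    \<le> (1 + L_zstar + int_exp \<xi> T * (L_reduced + Lzf)) * (x_sample x T k + z_gap x zd T k)"
proof -
  let ?a = "real k * T" and ?p = "int_exp \<xi> T" and ?u = "x_sample x T k" and ?v = "z_gap x zd T k"
  have "0 \<le> ?p" using T_pos int_exp_nonneg by simp
  then have nonneg: "0 \<le> L_zstar * ?v" "0 \<le> ?p * L_reduced * ?v" "0 \<le> ?p * Lzf * ?u"
    using L_zstar_nonneg L_reduced_nonneg Lzf_nonneg x_sample_nonneg z_gap_nonneg by simp_all
  have "nX (x s) \<le> nX (x s - x ?a) + ?u"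
    using is_norm_triangle[OF norm_X, of "x s - x ?a" "x ?a"] unfolding x_sample_def by simp
  moreover have "nZ (zd k) \<le> ?v + L_zstar * ?u"
    using is_norm_triangle[OF norm_Z, of "zd k - zstar (x ?a)" "zstar (x ?a)"]
      zstar_bound[OF solution_in_X[of ?a]] T_pos
    unfolding x_sample_def z_gap_def by simp
  ultimately have "nX (x s) + nZ (zd k)
      \<le> ?u + ?p * (Lzf * ?v + L_reduced * ?u) + (?v + L_zstar * ?u)"
    using sampled_drift[OF assms] by linarith
  also have "\<dots> \<le> (1 + L_zstar + ?p * (L_reduced + Lzf)) * (?u + ?v)"
    using nonneg by (simp add: algebra_simps)
  finally show ?thesis .
qed

lemma state_le_sampled_floor:
  assumes "0 \<le> t"
  shows "nX (x t) + nZ (zsig T zd t)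
    \<le> (1 + L_zstar + int_exp \<xi> T * (L_reduced + Lzf))
      * (x_sample x T (nat \<lfloor>t / T\<rfloor>) + z_gap x zd T (nat \<lfloor>t / T\<rfloor>))"
  using state_le_sampled nat_floor_divide_bounds[OF assms T_pos] by (simp add: zsig_def)

lemma sampled_initial_le:
  "x_sample x T 0 + z_gap x zd T 0 \<le> (1 + L_zstar) * (nX (x 0) + nZ (zsig T zd 0))"
proof -
  have "nZ (zd 0 - zstar (x 0)) \<le> nZ (zd 0) + L_zstar * nX (x 0)"
    using is_norm_triangle[OF norm_Z, of "zd 0" "- zstar (x 0)"]
      zstar_bound[OF solution_in_X[OF order_refl]]
    by (simp add: is_norm_minus[OF norm_Z])
  then show ?thesis
    using mult_nonneg_nonneg[OF L_zstar_nonneg is_norm_nonneg[OF norm_Z, of "zd 0"]]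
    by (simp add: x_sample_def z_gap_def zsig_def algebra_simps)
qed

end

lemma sampled_matrix_weights:
  assumes "0 < T"
    and sampling: "int_exp \<xi> T * (LzG ^ n * L_zstar * Lzf + Lzf * L_zstar * L_reduced / \<zeta>)
      < 1 - LzG ^ n"
  defines "p \<equiv> int_exp \<xi> T" and "q \<equiv> int_exp (- \<zeta>) T"
    and "R \<equiv> 1 + L_zstar * int_exp \<xi> T * Lzf"
  obtains w1 w2 l where "0 < w1" "0 < w2" "0 < l" "l < 1"
    "w1 * (exp (- \<zeta> * T) + Lzf * q * L_zstar * p * L_reduced)
       + w2 * (LzG ^ n * L_zstar * p * L_reduced) \<le> l * w1"
    "w1 * (Lzf * q * R) + w2 * (LzG ^ n * R) \<le> l * w2"
proof -
  define m11 m12 m21 m22 where "m11 = exp (- \<zeta> * T) + Lzf * q * L_zstar * p * L_reduced"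
    and "m12 = Lzf * q * R" and "m21 = LzG ^ n * L_zstar * p * L_reduced" and "m22 = LzG ^ n * R"
  have "0 \<le> p" using \<open>0 < T\<close> int_exp_nonneg by (simp add: p_def)
  have exp_q: "exp (- \<zeta> * T) = 1 - \<zeta> * q" using mult_int_exp[of "- \<zeta>" T] by (simp add: q_def)
  moreover have "exp (- \<zeta> * T) < 1" using \<open>0 < T\<close> zeta_pos by simp
  ultimately have "0 < q" using zeta_pos by (simp add: zero_less_mult_iff)
  have "0 \<le> R" using \<open>0 \<le> p\<close> L_zstar_nonneg Lzf_nonneg by (simp add: R_def p_def)
  have "0 \<le> p * (Lzf * L_zstar * L_reduced / \<zeta>)"
    using \<open>0 \<le> p\<close> Lzf_nonneg L_zstar_nonneg L_reduced_nonneg zeta_pos by simp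
  then have "m22 < 1" using sampling by (simp add: m22_def R_def p_def algebra_simps)
  have "(1 - m11) * (1 - m22) - m12 * m21 =
      q * \<zeta> * (1 - LzG ^ n - p * (LzG ^ n * L_zstar * Lzf + Lzf * L_zstar * L_reduced / \<zeta>))"
  proof -
    have m11: "m11 = 1 - \<zeta> * q + Lzf * q * L_zstar * p * L_reduced" unfolding m11_def exp_q by simp
    show ?thesis
      unfolding m11 using zeta_pos by (simp add: m12_def m21_def m22_def R_def p_def field_simps)
  qed
  moreover have
    "0 < q * \<zeta> * (1 - LzG ^ n - p * (LzG ^ n * L_zstar * Lzf + Lzf * L_zstar * L_reduced / \<zeta>))"
    using sampling \<open>0 < q\<close> zeta_pos by (simp add: p_def)
  ultimately have "m12 * m21 < (1 - m11) * (1 - m22)" by linarith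
  moreover have "0 \<le> m12" "0 \<le> m21" "0 \<le> m22"
    using \<open>0 \<le> p\<close> \<open>0 < q\<close> \<open>0 \<le> R\<close> Lzf_nonneg L_zstar_nonneg L_reduced_nonneg LzG_nonneg
    by (simp_all add: m12_def m21_def m22_def)
  ultimately show ?thesis
    using nonneg_matrix_weighted_contraction \<open>m22 < 1\<close> that
    unfolding m11_def m12_def m21_def m22_def by blast
qed

lemma sampled_geometric_decay:
  assumes "0 < T"
    and sampling: "int_exp \<xi> T * (LzG ^ n * L_zstar * Lzf + Lzf * L_zstar * L_reduced / \<zeta>)
      < 1 - LzG ^ n"
  obtains K l where "0 < K" "0 < l" "l < 1"
    "\<And>x zm1 zd k. interconnected_solution f G X Z T n x zm1 zd \<Longrightarrow>
       x_sample x T k + z_gap x zd T k \<le> K * l ^ k * (x_sample x T 0 + z_gap x zd T 0)"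
proof -
  obtain w1 w2 l where w: "0 < w1" "0 < w2" "0 < l" "l < 1"
    and contraction:
    "w1 * (exp (- \<zeta> * T) + Lzf * int_exp (- \<zeta>) T * L_zstar * int_exp \<xi> T * L_reduced)
       + w2 * (LzG ^ n * L_zstar * int_exp \<xi> T * L_reduced) \<le> l * w1"
    "w1 * (Lzf * int_exp (- \<zeta>) T * (1 + L_zstar * int_exp \<xi> T * Lzf))
       + w2 * (LzG ^ n * (1 + L_zstar * int_exp \<xi> T * Lzf)) \<le> l * w2"
    using sampled_matrix_weights[OF assms] by blast
  have "x_sample x T k + z_gap x zd T k
      \<le> max w1 w2 / min w1 w2 * l ^ k * (x_sample x T 0 + z_gap x zd T 0)"
    if sol: "interconnected_solution f G X Z T n x zm1 zd" for x zm1 zd k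
  proof (rule coupled_recursion_geometric_decay[OF w(1,2) less_imp_le[OF w(3)] contraction
        x_sample_nonneg z_gap_nonneg])
    show "x_sample x T (Suc k)
        \<le> (exp (- \<zeta> * T) + Lzf * int_exp (- \<zeta>) T * L_zstar * int_exp \<xi> T * L_reduced)
          * x_sample x T k
        + Lzf * int_exp (- \<zeta>) T * (1 + L_zstar * int_exp \<xi> T * Lzf) * z_gap x zd T k"
      for k
      using sampled_step(1)[OF sol \<open>0 < T\<close>, of k] by (simp add: period_gap_bound_def algebra_simps)
    show "z_gap x zd T (Suc k) \<le> LzG ^ n * L_zstar * int_exp \<xi> T * L_reduced * x_sample x T k
        + LzG ^ n * (1 + L_zstar * int_exp \<xi> T * Lzf) * z_gap x zd T k" for k
      using sampled_step(2)[OF sol \<open>0 < T\<close>, of k] by (simp add: period_gap_bound_def algebra_simps)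
  qed
  moreover have "0 < max w1 w2 / min w1 w2" using w by simp
  ultimately show ?thesis using that w(3,4) by blast
qed

lemma sum_norm_exponential_decay:
  assumes "0 < T"
    and sampling: "int_exp \<xi> T * (LzG ^ n * L_zstar * Lzf + Lzf * L_zstar * L_reduced / \<zeta>)
      < 1 - LzG ^ n"
  obtains \<rho> \<alpha> where "0 < \<rho>" "0 < \<alpha>"
    "\<And>x zm1 zd t. interconnected_solution f G X Z T n x zm1 zd \<Longrightarrow> 0 \<le> t \<Longrightarrow>
       nX (x t) + nZ (zsig T zd t) \<le> \<rho> * exp (- \<alpha> * t) * (nX (x 0) + nZ (zsig T zd 0))"
proof -
  obtain K l where K: "0 < K" "0 < l" "l < 1"
    and decay: "\<And>x zm1 zd k. interconnected_solution f G X Z T n x zm1 zd \<Longrightarrow>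
       x_sample x T k + z_gap x zd T k \<le> K * l ^ k * (x_sample x T 0 + z_gap x zd T 0)"
    using sampled_geometric_decay[OF assms] by blast
  define K1 where "K1 = 1 + L_zstar + int_exp \<xi> T * (L_reduced + Lzf)"
  define \<alpha> where "\<alpha> = - ln l / T"
  define \<rho> where "\<rho> = K1 * K * (1 + L_zstar) / l"
  have "1 \<le> K1"
    using L_zstar_nonneg L_reduced_nonneg Lzf_nonneg int_exp_nonneg[of T \<xi>] \<open>0 < T\<close>
    by (simp add: K1_def)
  have "nX (x t) + nZ (zsig T zd t) \<le> \<rho> * exp (- \<alpha> * t) * (nX (x 0) + nZ (zsig T zd 0))"
    if sol: "interconnected_solution f G X Z T n x zm1 zd" and "0 \<le> t" for x zm1 zd t
  proof -
    let ?k = "nat \<lfloor>t / T\<rfloor>" and ?N0 = "nX (x 0) + nZ (zsig T zd 0)"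
    have "nX (x t) + nZ (zsig T zd t) \<le> K1 * (x_sample x T ?k + z_gap x zd T ?k)"
      using state_le_sampled_floor[OF sol \<open>0 < T\<close> \<open>0 \<le> t\<close>] unfolding K1_def .
    also have "\<dots> \<le> K1 * (K * l ^ ?k * ((1 + L_zstar) * ?N0))"
      using order_trans[OF decay[OF sol] mult_left_mono[OF sampled_initial_le[OF sol \<open>0 < T\<close>]]]
        \<open>1 \<le> K1\<close> K
      by (intro mult_left_mono) auto
    also have "\<dots> \<le> K1 * (K * (exp (- \<alpha> * t) / l) * ((1 + L_zstar) * ?N0))"
      using power_nat_floor_le_exp[OF K(2,3) \<open>0 \<le> t\<close> \<open>0 < T\<close>] \<open>1 \<le> K1\<close> K L_zstar_nonneg
        is_norm_nonneg[OF norm_X] is_norm_nonneg[OF norm_Z]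
      by (intro mult_left_mono mult_right_mono) (auto simp: \<alpha>_def)
    also have "\<dots> = \<rho> * exp (- \<alpha> * t) * ?N0"
      by (simp add: \<rho>_def)
    finally show ?thesis .
  qed
  moreover have "0 < \<alpha>"
    using ln_less_zero[OF K(2,3)] \<open>0 < T\<close> by (simp add: \<alpha>_def divide_neg_pos)
  moreover have "0 < \<rho>" using K \<open>1 \<le> K1\<close> L_zstar_nonneg by (simp add: \<rho>_def)
  ultimately show ?thesis using that by blast
qed

theorem eta_norm_exponential_decay:
  assumes "0 < T"
    and "int_exp \<xi> T * (LzG ^ n * L_zstar * Lzf + Lzf * L_zstar * L_reduced / \<zeta>)
      < 1 - LzG ^ n"
  shows "\<exists>\<eta>1 \<eta>2 \<rho> \<alpha>. \<eta>1 > 0 \<and> \<eta>2 > 0 \<and> \<rho> > 0 \<and> \<alpha> > 0 \<and>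
    (\<forall>x zm1 zd. interconnected_solution f G X Z T n x zm1 zd \<longrightarrow>
       (\<forall>t\<ge>0. eta_norm \<eta>1 \<eta>2 (nX (x t)) (nZ (zsig T zd t))
          \<le> \<rho> * exp (- \<alpha> * t) * eta_norm \<eta>1 \<eta>2 (nX (x 0)) (nZ (zsig T zd 0))))"
proof -
  obtain \<rho> \<alpha> where "0 < \<rho>" "0 < \<alpha>"
    and decay: "\<And>x zm1 zd t. interconnected_solution f G X Z T n x zm1 zd \<Longrightarrow> 0 \<le> t \<Longrightarrow>
       nX (x t) + nZ (zsig T zd t) \<le> \<rho> * exp (- \<alpha> * t) * (nX (x 0) + nZ (zsig T zd 0))"
    using sum_norm_exponential_decay[OF assms] by blast
  have "eta_norm 1 1 (nX (x t)) (nZ (zsig T zd t))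
      \<le> sqrt 2 * \<rho> * exp (- \<alpha> * t) * eta_norm 1 1 (nX (x 0)) (nZ (zsig T zd 0))"
    if "interconnected_solution f G X Z T n x zm1 zd" "0 \<le> t" for x zm1 zd t
  proof -
    have "eta_norm 1 1 (nX (x t)) (nZ (zsig T zd t)) \<le> nX (x t) + nZ (zsig T zd t)"
      using eta_norm_one_le_add is_norm_nonneg[OF norm_X] is_norm_nonneg[OF norm_Z] by blast
    also have "\<dots> \<le> \<rho> * exp (- \<alpha> * t) * (nX (x 0) + nZ (zsig T zd 0))"
      by (rule decay[OF that])
    also have "\<dots> \<le> \<rho> * exp (- \<alpha> * t) * (sqrt 2 * eta_norm 1 1 (nX (x 0)) (nZ (zsig T zd 0)))"
      using \<open>0 < \<rho>\<close> by (intro mult_left_mono add_le_sqrt_2_eta_norm_one) simp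
    finally show ?thesis by (simp add: ac_simps)
  qed
  then show ?thesis using \<open>0 < \<rho>\<close> \<open>0 < \<alpha>\<close>
    by (intro exI[of _ 1] exI[of _ "sqrt 2 * \<rho>"] exI[of _ \<alpha>]) auto
qed

end

lemma sampled_interconnectionI:
  fixes nX :: "'x::euclidean_space \<Rightarrow> real" and nZ :: "'z::real_vector \<Rightarrow> real"
  assumes norm_X: "is_norm nX" and norm_Z: "is_norm nZ"
    and pairing: "compatible_weak_pairing wp nX"
    and "0 \<in> X" "0 \<in> Z" and "\<forall>x\<in>X. \<forall>z\<in>Z. G x z \<in> Z"
    and "f 0 0 = 0" "G 0 0 = 0"
    and "Lip_x f nX nX X Z < \<infinity>" "Lip_z f nX nZ X Z < \<infinity>"
    and "Lip_x G nZ nX X Z < \<infinity>" and LzG: "Lip_z G nZ nZ X Z < 1"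
    and "\<forall>x\<in>X. \<exists>z\<in>Z. G x z = z"
    and "osLip_x f wp nX X Z \<le> ereal \<xi>"
    and "0 < \<zeta>"
    and \<zeta>: "osLip (\<lambda>x. f x (THE z. z \<in> Z \<and> G x z = z)) wp nX X \<le> ereal (- \<zeta>)"
  shows "sampled_interconnection nX nZ wp X Z f G
    (real_of_ereal (Lip_x f nX nX X Z)) (real_of_ereal (Lip_z f nX nZ X Z))
    (real_of_ereal (Lip_x G nZ nX X Z)) (real_of_ereal (Lip_z G nZ nZ X Z)) \<xi> \<zeta>"
proof unfold_locales
  have "Lip_z G nZ nZ X Z < \<infinity>" using LzG by (cases "Lip_z G nZ nZ X Z") auto
  then show "nZ (G x z1 - G x z2) \<le> real_of_ereal (Lip_z G nZ nZ X Z) * nZ (z1 - z2)"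
    if "x \<in> X" "z1 \<in> Z" "z2 \<in> Z" for x z1 z2
    using Lip_z_le[OF norm_Z norm_Z _ that] by blast
  show "real_of_ereal (Lip_z G nZ nZ X Z) < 1"
    using LzG by (cases "Lip_z G nZ nZ X Z") auto
  show "wp (f x1 (THE z. z \<in> Z \<and> G x1 z = z) - f x2 (THE z. z \<in> Z \<and> G x2 z = z)) (x1 - x2)
      \<le> - \<zeta> * (nX (x1 - x2))\<^sup>2" if "x1 \<in> X" "x2 \<in> X" for x1 x2
    using osLip_le[OF norm_X pairing \<zeta> that] by simp
qed (use assms in \<open>auto intro: Lip_x_le Lip_z_le osLip_x_le osLip_le Lip_x_nonneg Lip_z_nonneg\<close>)

theorem theorem3:
  fixes nX :: "real ^ 'nx \<Rightarrow> real" and nZ :: "real ^ 'nz \<Rightarrow> real"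
    and wp :: "real ^ 'nx \<Rightarrow> real ^ 'nx \<Rightarrow> real"
    and X :: "(real ^ 'nx) set" and Z :: "(real ^ 'nz) set"
    and f :: "real ^ 'nx \<Rightarrow> real ^ 'nz \<Rightarrow> real ^ 'nx"
    and G :: "real ^ 'nx \<Rightarrow> real ^ 'nz \<Rightarrow> real ^ 'nz"
    and \<xi> \<zeta> :: real
  assumes norm_X: "is_norm nX" and norm_Z: "is_norm nZ"
    and pairing: "compatible_weak_pairing wp nX"
    and convX: "convex X" and convZ: "convex Z"
    and zeroX: "0 \<in> X" and zeroZ: "0 \<in> Z"
    and cont_f: "continuous_on (X \<times> Z) (\<lambda>(x, z). f x z)"
    and cont_G: "continuous_on (X \<times> Z) (\<lambda>(x, z). G x z)"
    and G_into: "\<forall>x\<in>X. \<forall>z\<in>Z. G x z \<in> Z"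
    and f0: "f 0 0 = 0" and G0: "G 0 0 = 0"
    and A1: "Lip_x f nX nX X Z < \<infinity>"
    and A2f: "0 < Lip_z f nX nZ X Z" "Lip_z f nX nZ X Z < \<infinity>"
    and A2G: "0 < Lip_x G nZ nX X Z" "Lip_x G nZ nX X Z < \<infinity>"
    and A3: "Lip_z G nZ nZ X Z < 1"
    and fixpt_ex: "\<forall>x\<in>X. \<exists>z\<in>Z. G x z = z"
    and xi: "osLip_x f wp nX X Z \<le> ereal \<xi>"
    and zeta_pos: "\<zeta> > 0"
    and zeta: "osLip (\<lambda>x. f x (THE z. z \<in> Z \<and> G x z = z)) wp nX X \<le> ereal (- \<zeta>)"
  defines "Lxf \<equiv> real_of_ereal (Lip_x f nX nX X Z)"
    and "Lzf \<equiv> real_of_ereal (Lip_z f nX nZ X Z)"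
    and "LxG \<equiv> real_of_ereal (Lip_x G nZ nX X Z)"
    and "LzG \<equiv> real_of_ereal (Lip_z G nZ nZ X Z)"
  shows "\<forall>n::nat. n > 0 \<longrightarrow>
           T_crit \<xi> \<zeta> (C1_const Lxf Lzf LxG LzG) (C2_const Lzf LxG LzG n) LzG n > 0 \<and>
           (\<forall>T. 0 < T \<and> ereal T < T_crit \<xi> \<zeta> (C1_const Lxf Lzf LxG LzG) (C2_const Lzf LxG LzG n) LzG n
              \<longrightarrow> (\<exists>\<eta>1 \<eta>2 \<rho> \<alpha>. \<eta>1 > 0 \<and> \<eta>2 > 0 \<and> \<rho> > 0 \<and> \<alpha> > 0 \<and>
                    (\<forall>x zm1 zd. interconnected_solution f G X Z T n x zm1 zd \<longrightarrow>
                       (\<forall>t\<ge>0. eta_norm \<eta>1 \<eta>2 (nX (x t)) (nZ (zsig T zd t))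
                          \<le> \<rho> * exp (- \<alpha> * t) * eta_norm \<eta>1 \<eta>2 (nX (x 0)) (nZ (zsig T zd 0))))))"
proof -
  \<comment> \<open>Convexity of \<open>X\<close>, \<open>Z\<close> and continuity of \<open>f\<close>, \<open>G\<close> only matter for the existence
    of solutions, which the statement takes for granted.\<close>
  interpret sampled_interconnection nX nZ wp X Z f G Lxf Lzf LxG LzG \<xi> \<zeta>
    unfolding Lxf_def Lzf_def LxG_def LzG_def
    by (rule sampled_interconnectionI[OF norm_X norm_Z pairing zeroX zeroZ G_into f0 G0 A1 A2f(2)
          A2G(2) A3 fixpt_ex xi zeta_pos zeta])
  define D where "D n = LzG ^ n * L_zstar * Lzf + Lzf * L_zstar * L_reduced / \<zeta>" for n
  have "0 < Lzf" "0 < LxG" using A2f A2G by (simp_all add: Lzf_def LxG_def zero_less_real_of_ereal)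
  then have "0 < L_zstar" using LzG_less_1 by (simp add: L_zstar_def)
  then have "0 < L_reduced" using \<open>0 < Lzf\<close> Lxf_nonneg by (simp add: L_reduced_def add_nonneg_pos)
  then have "0 < D n" for n
    using \<open>0 < Lzf\<close> \<open>0 < L_zstar\<close> LzG_nonneg zeta_pos unfolding D_def
    by (intro add_nonneg_pos) simp_all
  then have q: "0 < (1 - LzG ^ n) / D n" if "0 < n" for n
    using that LzG_nonneg LzG_less_1 by (simp add: power_less_one_iff)
  have T_crit: "T_crit \<xi> \<zeta> (C1_const Lxf Lzf LxG LzG) (C2_const Lzf LxG LzG n) LzG n
      = crossing_time \<xi> ((1 - LzG ^ n) / D n)" for n
    by (simp add: T_crit_eq_crossing_time C1_const_def C2_const_def D_def L_zstar_def L_reduced_def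
        mult.assoc)
  have "int_exp \<xi> T * D n < 1 - LzG ^ n"
    if "0 < n" "ereal T < crossing_time \<xi> ((1 - LzG ^ n) / D n)" for n T
    using less_crossing_time_imp_int_exp_less[OF q[OF that(1)] that(2)] \<open>0 < D n\<close>
    by (simp add: pos_less_divide_eq)
  then show ?thesis
    unfolding T_crit using crossing_time_pos[OF q] eta_norm_exponential_decay unfolding D_def
    by blast
qed

end
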